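(* Let $n\ge2$ and let $\phi:\mathbb{R}^n\setminus\{0\}\to\mathbb{C}$ be continuous, homogeneous and even. Assume that for every $1\le k\le n-1$, \[ \operatorname{supp}(\phi)\cap\{\xi\in\mathbb{R}^n\setminus\{0\}:\xi_k=0\}=\emptyset. \] Then the function $\psi:\mathbb{R}^{n-1}\to\mathbb{C}$, $\psi(s_1,\dots,s_{n-1})=\phi(1,s_1,s_1s_2,\dots,s_1s_2\cdots s_{n-1})$, is continuous and compactly supported, and for every $\xi\in\mathbb{R}^n$ with $\xi_k\ne0$ for all $1\le k\le n-1$ we have \[ \phi(\xi_1,\dots,\xi_n)=\psi\Big(\frac{\xi_2}{\xi_1},\frac{\xi_3}{\xi_2},\dots,\frac{\xi_n}{\xi_{n-1}}\Big). \]
   Context: A function $\phi:\mathbb{R}^n\setminus\{0\}\to\mathbb{C}$ is homogeneous if $\phi(\mu\xi)=\phi(\xi)$ for all $\mu>0$, and even if $\phi(-\xi)=\phi(\xi)$. The support $\operatorname{supp}(\phi)$ is the closure, in $\mathbb{R}^n\setminus\{0\}$, of $\{\xi\in\mathbb{R}^n\setminus\{0\}:\phi(\xi)\ne0\}$. *)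

theory Defs
  imports "HOL-Analysis.Analysis"
begin

text \<open>Vectors of R^n are modelled as functions nat => real vanishing at all indices >= n;
  coordinate xi_k of the paper (1 <= k <= n) is xi (k-1). The topology is the product
  topology on nat => real, which restricted to Rn n is the Euclidean topology.\<close>

definition Rn :: "nat \<Rightarrow> (nat \<Rightarrow> real) set" where
  "Rn n = {x. \<forall>i\<ge>n. x i = 0}"

definition homogeneous_on :: "nat \<Rightarrow> ((nat \<Rightarrow> real) \<Rightarrow> complex) \<Rightarrow> bool" where
  "homogeneous_on n \<phi> \<longleftrightarrow>
     (\<forall>\<xi>\<in>Rn n - {\<lambda>_. 0}. \<forall>\<mu>::real. \<mu> > 0 \<longrightarrow> \<phi> (\<lambda>i. \<mu> * \<xi> i) = \<phi> \<xi>)"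

definition even_on :: "nat \<Rightarrow> ((nat \<Rightarrow> real) \<Rightarrow> complex) \<Rightarrow> bool" where
  "even_on n \<phi> \<longleftrightarrow> (\<forall>\<xi>\<in>Rn n - {\<lambda>_. 0}. \<phi> (\<lambda>i. - \<xi> i) = \<phi> \<xi>)"

definition supp_on :: "nat \<Rightarrow> ((nat \<Rightarrow> real) \<Rightarrow> complex) \<Rightarrow> (nat \<Rightarrow> real) set" where
  "supp_on n \<phi> = closure {\<xi> \<in> Rn n - {\<lambda>_. 0}. \<phi> \<xi> \<noteq> 0} \<inter> (Rn n - {\<lambda>_. 0})"

definition psi_of :: "nat \<Rightarrow> ((nat \<Rightarrow> real) \<Rightarrow> complex) \<Rightarrow> (nat \<Rightarrow> real) \<Rightarrow> complex" where
  "psi_of n \<phi> s = \<phi> (\<lambda>i. if i < n then (\<Prod>j<i. s j) else 0)"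

end

theory Submission
  imports Defs
begin

text \<open>Homogeneity and evenness make phi constant on punctured lines through the origin.
  The partial-product map P(s) = (1, s_1, s_1 s_2, ...) gives psi = phi o P, and P inverts the
  map R of consecutive ratios xi_(k+1) / xi_k up to the nonzero scalar xi_1; this yields the
  continuity of psi and phi = psi o R. If psi(s) is nonzero, then P(s) rescaled to the unit
  sphere lies in the compact set K = supp phi \<inter> S^(n-1), on which xi_1, ..., xi_(n-1) do not
  vanish. So R is continuous on K, and the support of psi lies in the compact set R(K).\<close>

lemma compact_closure_subset_compact:
  fixes S K :: "'a::t2_space set"
  assumes "compact K" "S \<subseteq> K"
  shows "compact (closure S)"
proof -
  have "closure S \<subseteq> K"
    using assms by (intro closure_minimal compact_imp_closed)
  then have "closure S = K \<inter> closure S" by blast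
  then show ?thesis using assms(1) by (metis compact_Int_closed closed_closure)
qed

lemma homogeneous_even_scale:
  assumes "homogeneous_on n \<phi>" "even_on n \<phi>" "\<xi> \<in> Rn n - {\<lambda>_. 0}" "c \<noteq> 0"
  shows "\<phi> (\<lambda>i. c * \<xi> i) = \<phi> \<xi>"
proof (cases "c > 0")
  case True
  then show ?thesis using assms(1,3) by (simp add: homogeneous_on_def)
next
  case False
  with assms(4) have "- c > 0" by simp
  have scaled: "(\<lambda>i. - c * \<xi> i) \<in> Rn n - {\<lambda>_. 0}"
    using assms(3,4) by (auto simp: Rn_def fun_eq_iff)
  have "\<phi> (\<lambda>i. - (- c * \<xi> i)) = \<phi> (\<lambda>i. - c * \<xi> i)"
    using bspec[OF assms(2)[unfolded even_on_def] scaled] by simp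
  also have "\<dots> = \<phi> \<xi>"
    using assms(1,3) \<open>- c > 0\<close> unfolding homogeneous_on_def by blast
  finally show ?thesis by simp
qed

definition partial_products :: "nat \<Rightarrow> (nat \<Rightarrow> real) \<Rightarrow> nat \<Rightarrow> real" where
  "partial_products n s = (\<lambda>i. if i < n then \<Prod>j<i. s j else 0)"

definition consecutive_ratios :: "nat \<Rightarrow> (nat \<Rightarrow> real) \<Rightarrow> nat \<Rightarrow> real" where
  "consecutive_ratios m \<xi> = (\<lambda>j. if j < m then \<xi> (Suc j) / \<xi> j else 0)"

lemma psi_of_partial_products: "psi_of n \<phi> s = \<phi> (partial_products n s)"
  by (simp add: psi_of_def partial_products_def)

lemma partial_products_in_Rn: "0 < n \<Longrightarrow> partial_products n s \<in> Rn n - {\<lambda>_. 0}"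
  by (auto simp: Rn_def partial_products_def fun_eq_iff intro!: exI[of _ 0])

lemma continuous_on_partial_products: "continuous_on UNIV (partial_products n)"
  unfolding partial_products_def
proof (intro continuous_on_coordinatewise_then_product)
  show "continuous_on UNIV (\<lambda>s::nat \<Rightarrow> real. if i < n then \<Prod>j<i. s j else 0)" for i
    by (cases "i < n") (auto intro!: continuous_on_prod)
qed

lemma continuous_on_consecutive_ratios:
  assumes "\<And>\<xi> j. \<xi> \<in> K \<Longrightarrow> j < m \<Longrightarrow> \<xi> j \<noteq> 0"
  shows "continuous_on K (consecutive_ratios m)"
  unfolding consecutive_ratios_def
proof (intro continuous_on_coordinatewise_then_product)
  have coordinate: "continuous_on K (\<lambda>\<xi>::nat \<Rightarrow> real. \<xi> i)" for i
    by (rule continuous_on_subset[OF continuous_on_product_coordinates]) auto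
  show "continuous_on K (\<lambda>\<xi>. if j < m then \<xi> (Suc j) / \<xi> j else 0)" for j
    using assms by (cases "j < m") (auto intro!: continuous_on_divide coordinate)
qed

lemma partial_products_consecutive_ratios:
  assumes "\<xi> \<in> Rn n" "\<And>k. k < n - 1 \<Longrightarrow> \<xi> k \<noteq> 0" "\<xi> 0 \<noteq> 0"
  shows "partial_products n (consecutive_ratios (n - 1) \<xi>) = (\<lambda>i. \<xi> i / \<xi> 0)"
proof
  fix i
  have "(\<Prod>j<i. consecutive_ratios (n - 1) \<xi> j) = \<xi> i / \<xi> 0" if "i < n"
    using that
  proof (induction i)
    case (Suc i)
    then have "\<xi> i \<noteq> 0" using assms(2) by simp
    with Suc show ?case by (simp add: consecutive_ratios_def)
  qed (use assms(3) in simp)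
  then show "partial_products n (consecutive_ratios (n - 1) \<xi>) i = \<xi> i / \<xi> 0"
    using assms(1) by (simp add: partial_products_def Rn_def)
qed

lemma consecutive_ratios_scale:
  "c \<noteq> 0 \<Longrightarrow> consecutive_ratios m (\<lambda>i. c * \<xi> i) = consecutive_ratios m \<xi>"
  by (simp add: consecutive_ratios_def fun_eq_iff)

lemma consecutive_ratios_partial_products:
  assumes "s \<in> Rn (n - 1)" "\<And>j. j < n - 1 \<Longrightarrow> partial_products n s j \<noteq> 0"
  shows "consecutive_ratios (n - 1) (partial_products n s) = s"
proof
  fix j
  show "consecutive_ratios (n - 1) (partial_products n s) j = s j"
  proof (cases "j < n - 1")
    case True
    then have "partial_products n s (Suc j) = partial_products n s j * s j"
      by (simp add: partial_products_def)
    with True assms(2)[OF True] show ?thesis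
      by (simp add: consecutive_ratios_def)
  next
    case False
    with assms(1) show ?thesis by (simp add: consecutive_ratios_def Rn_def)
  qed
qed

lemma continuous_on_psi_of:
  assumes "0 < n" "continuous_on (Rn n - {\<lambda>_. 0}) \<phi>"
  shows "continuous_on UNIV (psi_of n \<phi>)"
  unfolding psi_of_partial_products
  using assms partial_products_in_Rn
  by (intro continuous_on_compose2[OF assms(2) continuous_on_partial_products]) auto

lemma eq_psi_of_consecutive_ratios:
  assumes "homogeneous_on n \<phi>" "even_on n \<phi>"
    and "\<xi> \<in> Rn n" "\<And>k. k < n - 1 \<Longrightarrow> \<xi> k \<noteq> 0" "\<xi> 0 \<noteq> 0"
  shows "\<phi> \<xi> = psi_of n \<phi> (consecutive_ratios (n - 1) \<xi>)"
proof -
  have "psi_of n \<phi> (consecutive_ratios (n - 1) \<xi>) = \<phi> (\<lambda>i. inverse (\<xi> 0) * \<xi> i)"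
    using partial_products_consecutive_ratios[OF assms(3-5)]
    by (simp add: psi_of_partial_products divide_inverse mult.commute)
  also have "\<dots> = \<phi> \<xi>"
    using assms by (intro homogeneous_even_scale) auto
  finally show ?thesis by simp
qed

definition Rn_unit_sphere :: "nat \<Rightarrow> (nat \<Rightarrow> real) set" where
  "Rn_unit_sphere n = {x \<in> Rn n. (\<Sum>i<n. (x i)\<^sup>2) = 1}"

lemma Rn_unit_sphere_subset: "Rn_unit_sphere n \<subseteq> Rn n - {\<lambda>_. 0}"
  by (auto simp: Rn_unit_sphere_def)

lemma compact_Rn_unit_sphere: "compact (Rn_unit_sphere n)"
proof -
  define B where "B = PiE UNIV (\<lambda>i::nat. if i < n then {-1..1::real} else {0})"
  have "compactin (product_topology (\<lambda>_. euclidean) UNIV) B"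
    unfolding B_def by (subst compactin_PiE) auto
  then have "compact B" by (simp add: euclidean_product_topology)
  moreover have "closed {x::nat \<Rightarrow> real. (\<Sum>i<n. (x i)\<^sup>2) = 1}"
    by (intro closed_Collect_eq continuous_intros continuous_on_product_coordinates)
  moreover have "Rn_unit_sphere n = B \<inter> {x. (\<Sum>i<n. (x i)\<^sup>2) = 1}"
  proof (intro set_eqI iffI)
    fix x assume x: "x \<in> Rn_unit_sphere n"
    have "(x i)\<^sup>2 \<le> 1" if "i < n" for i
      using x that member_le_sum[of i "{..<n}" "\<lambda>i. (x i)\<^sup>2"]
      by (simp add: Rn_unit_sphere_def)
    then show "x \<in> B \<inter> {x. (\<Sum>i<n. (x i)\<^sup>2) = 1}"
      using x by (auto simp: B_def Rn_unit_sphere_def Rn_def abs_square_le_1 abs_le_iff)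
  next
    fix x assume x: "x \<in> B \<inter> {x. (\<Sum>i<n. (x i)\<^sup>2) = 1}"
    then have "x i \<in> (if i < n then {-1..1} else {0})" for i
      by (auto simp: B_def PiE_iff)
    then have "x i = 0" if "n \<le> i" for i
      using that by (metis not_less singletonD)
    then show "x \<in> Rn_unit_sphere n"
      using x by (auto simp: Rn_unit_sphere_def Rn_def)
  qed
  ultimately show ?thesis by (simp add: compact_Int_closed)
qed

lemma Rn_unit_sphere_ray:
  assumes "x \<in> Rn n - {\<lambda>_. 0}"
  obtains c :: real where "c > 0" "(\<lambda>i. c * x i) \<in> Rn_unit_sphere n"
proof
  define N where "N = (\<Sum>i<n. (x i)\<^sup>2)"
  obtain k where "x k \<noteq> 0" using assms by auto
  moreover have "k < n" using assms \<open>x k \<noteq> 0\<close> by (auto simp: Rn_def not_less[symmetric])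
  ultimately have "N > 0"
    unfolding N_def by (intro sum_pos2[of _ k]) auto
  then show "inverse (sqrt N) > 0" by simp
  have "(inverse (sqrt N) * x i)\<^sup>2 = (x i)\<^sup>2 / N" for i
    using \<open>N > 0\<close> by (simp add: power_mult_distrib power_inverse divide_inverse)
  then have "(\<Sum>i<n. (inverse (sqrt N) * x i)\<^sup>2) = (\<Sum>i<n. (x i)\<^sup>2) / N"
    by (simp add: sum_divide_distrib)
  then show "(\<lambda>i. inverse (sqrt N) * x i) \<in> Rn_unit_sphere n"
    using assms \<open>N > 0\<close> by (auto simp: Rn_unit_sphere_def Rn_def N_def)
qed

lemma nonzero_psi_of_subset_consecutive_ratios:
  assumes "0 < n" "homogeneous_on n \<phi>"
    and "\<forall>\<xi>\<in>supp_on n \<phi>. \<forall>k<n - 1. \<xi> k \<noteq> 0"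
  shows "{s \<in> Rn (n - 1). psi_of n \<phi> s \<noteq> 0}
    \<subseteq> consecutive_ratios (n - 1) ` (supp_on n \<phi> \<inter> Rn_unit_sphere n)"
proof
  fix s assume s: "s \<in> {s \<in> Rn (n - 1). psi_of n \<phi> s \<noteq> 0}"
  define x where "x = partial_products n s"
  have x: "x \<in> Rn n - {\<lambda>_. 0}"
    using partial_products_in_Rn[OF assms(1)] by (simp add: x_def)
  obtain c where "c > 0" and y: "(\<lambda>i. c * x i) \<in> Rn_unit_sphere n"
    using Rn_unit_sphere_ray[OF x] by blast
  have "\<phi> (\<lambda>i. c * x i) = \<phi> x"
    using assms(2) x \<open>c > 0\<close> unfolding homogeneous_on_def by blast
  also have "\<phi> x \<noteq> 0"
    using s by (simp add: psi_of_partial_products x_def)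
  finally have "(\<lambda>i. c * x i) \<in> {\<xi> \<in> Rn n - {\<lambda>_. 0}. \<phi> \<xi> \<noteq> 0}"
    using y Rn_unit_sphere_subset by auto
  then have y_supp: "(\<lambda>i. c * x i) \<in> supp_on n \<phi>"
    by (auto simp: supp_on_def intro: closure_subset[THEN subsetD])
  have "\<forall>j<n - 1. x j \<noteq> 0"
    using bspec[OF assms(3) y_supp] by simp
  then have "consecutive_ratios (n - 1) x = s"
    using s unfolding x_def by (intro consecutive_ratios_partial_products) auto
  then have "consecutive_ratios (n - 1) (\<lambda>i. c * x i) = s"
    using \<open>c > 0\<close> by (simp add: consecutive_ratios_scale)
  then show "s \<in> consecutive_ratios (n - 1) ` (supp_on n \<phi> \<inter> Rn_unit_sphere n)"
    using y_supp y by blast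
qed

lemma compact_support_psi_of:
  assumes "0 < n" "homogeneous_on n \<phi>"
    and "\<forall>\<xi>\<in>supp_on n \<phi>. \<forall>k<n - 1. \<xi> k \<noteq> 0"
  shows "compact (closure {s \<in> Rn (n - 1). psi_of n \<phi> s \<noteq> 0})"
proof -
  let ?K = "supp_on n \<phi> \<inter> Rn_unit_sphere n"
  have "?K = closure {\<xi> \<in> Rn n - {\<lambda>_. 0}. \<phi> \<xi> \<noteq> 0} \<inter> Rn_unit_sphere n"
    using Rn_unit_sphere_subset by (auto simp: supp_on_def)
  then have "compact ?K"
    by (simp add: closed_Int_compact compact_Rn_unit_sphere)
  moreover have "continuous_on ?K (consecutive_ratios (n - 1))"
    using assms(3) by (intro continuous_on_consecutive_ratios) auto
  ultimately have "compact (consecutive_ratios (n - 1) ` ?K)"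
    by (rule compact_continuous_image[rotated])
  then show ?thesis
    using nonzero_psi_of_subset_consecutive_ratios[OF assms] by (rule compact_closure_subset_compact)
qed

theorem proposition4p2:
  fixes n :: nat and \<phi> :: "(nat \<Rightarrow> real) \<Rightarrow> complex"
  assumes "n \<ge> 2"
    and "continuous_on (Rn n - {\<lambda>_. 0}) \<phi>"
    and "homogeneous_on n \<phi>"
    and "even_on n \<phi>"
    and "\<forall>k<n - 1. supp_on n \<phi> \<inter> {\<xi> \<in> Rn n - {\<lambda>_. 0}. \<xi> k = 0} = {}"
  shows "continuous_on (Rn (n - 1)) (psi_of n \<phi>)
    \<and> compact (closure {s \<in> Rn (n - 1). psi_of n \<phi> s \<noteq> 0})
    \<and> (\<forall>\<xi>\<in>Rn n. (\<forall>k<n - 1. \<xi> k \<noteq> 0) \<longrightarrow>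
          \<phi> \<xi> = psi_of n \<phi> (\<lambda>j. if j < n - 1 then \<xi> (Suc j) / \<xi> j else 0))"
proof (intro conjI ballI impI)
  have "0 < n" using assms(1) by simp
  then show "continuous_on (Rn (n - 1)) (psi_of n \<phi>)"
    by (rule continuous_on_subset[OF continuous_on_psi_of[OF _ assms(2)]]) simp
  have "\<forall>\<xi>\<in>supp_on n \<phi>. \<forall>k<n - 1. \<xi> k \<noteq> 0"
    using assms(5) by (auto simp: supp_on_def)
  with \<open>0 < n\<close> show "compact (closure {s \<in> Rn (n - 1). psi_of n \<phi> s \<noteq> 0})"
    by (rule compact_support_psi_of[OF _ assms(3)])
  fix \<xi> assume "\<xi> \<in> Rn n" and nonzero: "\<forall>k<n - 1. \<xi> k \<noteq> 0"
  moreover from nonzero assms(1) have "\<xi> 0 \<noteq> 0" by simp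
  ultimately show "\<phi> \<xi> = psi_of n \<phi> (\<lambda>j. if j < n - 1 then \<xi> (Suc j) / \<xi> j else 0)"
    using eq_psi_of_consecutive_ratios[OF assms(3,4)] by (simp add: consecutive_ratios_def)
qed

end
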